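(* Let $\theta\in\Theta_p(s_1,s_2)$. There exists a constant $c_0>0$, not depending on $n$ or $p$, such that for any (fixed, deterministic) classification rule $G:\mathbb R^p\to\{1,2\}$ with $L_\theta(G)<c_0$, $$L_\theta(G)^2\lesssim P_\theta(G(z)\ne L(z))-P_\theta(G^*_\theta(z)\ne L(z)).$$
   Context: Two-class Gaussian model with parameter $\theta=(\pi_1,\pi_2,\mu_1,\mu_2,\Sigma_1,\Sigma_2)$: $z$ has true label $L(z)$ with $P(L(z)=k)=\pi_k$ and $z\mid L(z)=k\sim N_p(\mu_k,\Sigma_k)$. Write $\Omega_k=\Sigma_k^{-1}$, $\delta=\mu_2-\mu_1$, $\bar\mu=(\mu_1+\mu_2)/2$, $D=\Omega_2-\Omega_1$, $\beta=\Omega_2\delta$, $Q(z;\theta)=(z-\mu_1)^\top D(z-\mu_1)-2\beta^\top(z-\bar\mu)-\log(|\Sigma_1|/|\Sigma_2|)+2\log(\pi_1/\pi_2)$; the Bayes rule is $G^*_\theta(z)=1$ if $Q(z;\theta)>0$, else $2$. Define $L_\theta(G)=P_\theta(G(z)\ne G^*_\theta(z))$. Let $f_{Q,\theta}$ be the density of $Q(z;\theta)$ with $z\sim\pi_1N_p(\mu_1,\Sigma_1)+\pi_2N_p(\mu_2,\Sigma_2)$. For fixed constants $M_0>0$, $M_1>1$, $\delta_0>0$, $M_2>0$, $c\in(0,1/2)$, $\Theta_p(s_1,s_2)$ is the set of $\theta$ with $\Sigma_1,\Sigma_2$ positive definite, $|D|_0\le s_1$, $\|\beta\|_0\le s_2$,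 $\|D\|_F,\|\beta\|_2\le M_0$, $M_1^{-1}\le\lambda_{\min}(\Sigma_k)\le\lambda_{\max}(\Sigma_k)\le M_1$ ($k=1,2$), $\sup_{|x|<\delta_0}f_{Q,\theta}(x)<M_2$, $c\le\pi_1,\pi_2\le1-c$. $a\lesssim b$ means $a\le Cb$ with $C$ depending only on these fixed constants. *)

theory Defs
  imports "HOL-Probability.Probability"
    "Jordan_Normal_Form.Gauss_Jordan_Elimination"
    "Jordan_Normal_Form.Char_Poly"
    "Jordan_Normal_Form.Determinant"
begin

text \<open>Points of R^p are functions nat => real, living in the space of the product
  measure over the index set {..<p}; vec_of converts them to JNF vectors.\<close>

definition lborel_p :: "nat \<Rightarrow> (nat \<Rightarrow> real) measure" where
  "lborel_p p = PiM {..<p} (\<lambda>_. lborel)"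

definition vec_of :: "nat \<Rightarrow> (nat \<Rightarrow> real) \<Rightarrow> real vec" where
  "vec_of p z = vec p z"

definition prec :: "real mat \<Rightarrow> real mat" where
  "prec S = the (mat_inverse S)"

definition quad :: "real mat \<Rightarrow> real vec \<Rightarrow> real" where
  "quad A x = scalar_prod x (A *\<^sub>v x)"

definition gauss_dens :: "nat \<Rightarrow> real vec \<Rightarrow> real mat \<Rightarrow> (nat \<Rightarrow> real) \<Rightarrow> real" where
  "gauss_dens p mu S z =
     exp (- quad (prec S) (vec_of p z - mu) / 2) / sqrt ((2 * pi) ^ p * det S)"

text \<open>Joint law of (z, L(z)): P(L=k) = pi_k and z | L=k ~ N_p(mu_k, Sigma_k).\<close>
definition joint :: "nat \<Rightarrow> real \<Rightarrow> real \<Rightarrow> real vec \<Rightarrow> real vec \<Rightarrow> real mat \<Rightarrow> real mat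
    \<Rightarrow> ((nat \<Rightarrow> real) \<times> nat) measure" where
  "joint p pi1 pi2 mu1 mu2 S1 S2 =
     density (lborel_p p \<Otimes>\<^sub>M count_space {1,2::nat})
       (\<lambda>(z,k). ennreal (if k = 1 then pi1 * gauss_dens p mu1 S1 z
                           else pi2 * gauss_dens p mu2 S2 z))"

definition Dmat :: "real mat \<Rightarrow> real mat \<Rightarrow> real mat" where
  "Dmat S1 S2 = prec S2 - prec S1"

definition betav :: "real vec \<Rightarrow> real vec \<Rightarrow> real mat \<Rightarrow> real vec" where
  "betav mu1 mu2 S2 = prec S2 *\<^sub>v (mu2 - mu1)"

definition Qfun :: "nat \<Rightarrow> real \<Rightarrow> real \<Rightarrow> real vec \<Rightarrow> real vec \<Rightarrow> real mat \<Rightarrow> real mat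
    \<Rightarrow> (nat \<Rightarrow> real) \<Rightarrow> real" where
  "Qfun p pi1 pi2 mu1 mu2 S1 S2 z =
     quad (Dmat S1 S2) (vec_of p z - mu1)
     - 2 * scalar_prod (betav mu1 mu2 S2) (vec_of p z - (1/2) \<cdot>\<^sub>v (mu1 + mu2))
     - ln (det S1 / det S2) + 2 * ln (pi1 / pi2)"

definition Gstar :: "nat \<Rightarrow> real \<Rightarrow> real \<Rightarrow> real vec \<Rightarrow> real vec \<Rightarrow> real mat \<Rightarrow> real mat
    \<Rightarrow> (nat \<Rightarrow> real) \<Rightarrow> nat" where
  "Gstar p pi1 pi2 mu1 mu2 S1 S2 z =
     (if Qfun p pi1 pi2 mu1 mu2 S1 S2 z > 0 then 1 else 2)"

definition pos_def :: "nat \<Rightarrow> real mat \<Rightarrow> bool" where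
  "pos_def p S \<longleftrightarrow> S \<in> carrier_mat p p \<and> S\<^sup>T = S \<and>
     (\<forall>x \<in> carrier_vec p. x \<noteq> 0\<^sub>v p \<longrightarrow> quad S x > 0)"

definition lam_min :: "real mat \<Rightarrow> real" where
  "lam_min S = Min {k. eigenvalue S k}"

definition lam_max :: "real mat \<Rightarrow> real" where
  "lam_max S = Max {k. eigenvalue S k}"

definition l0_mat :: "real mat \<Rightarrow> nat" where
  "l0_mat A = card {(i,j). i < dim_row A \<and> j < dim_col A \<and> A $$ (i,j) \<noteq> 0}"

definition l0_vec :: "real vec \<Rightarrow> nat" where
  "l0_vec v = card {i. i < dim_vec v \<and> v $ i \<noteq> 0}"

definition frob :: "real mat \<Rightarrow> real" where
  "frob A = sqrt (\<Sum>i<dim_row A. \<Sum>j<dim_col A. (A $$ (i,j))\<^sup>2)"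

definition l2 :: "real vec \<Rightarrow> real" where
  "l2 v = sqrt (\<Sum>i<dim_vec v. (v $ i)\<^sup>2)"

definition Theta :: "real \<Rightarrow> real \<Rightarrow> real \<Rightarrow> real \<Rightarrow> real \<Rightarrow> nat \<Rightarrow> nat \<Rightarrow> nat
    \<Rightarrow> (real \<times> real \<times> real vec \<times> real vec \<times> real mat \<times> real mat) set" where
  "Theta M0 M1 \<delta>0 M2 c p s1 s2 = {(pi1, pi2, mu1, mu2, S1, S2).
     mu1 \<in> carrier_vec p \<and> mu2 \<in> carrier_vec p \<and>
     pos_def p S1 \<and> pos_def p S2 \<and>
     l0_mat (Dmat S1 S2) \<le> s1 \<and> l0_vec (betav mu1 mu2 S2) \<le> s2 \<and>
     frob (Dmat S1 S2) \<le> M0 \<and> l2 (betav mu1 mu2 S2) \<le> M0 \<and>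
     1 / M1 \<le> lam_min S1 \<and> lam_min S1 \<le> lam_max S1 \<and> lam_max S1 \<le> M1 \<and>
     1 / M1 \<le> lam_min S2 \<and> lam_min S2 \<le> lam_max S2 \<and> lam_max S2 \<le> M1 \<and>
     (\<exists>f. distributed (joint p pi1 pi2 mu1 mu2 S1 S2) lborel
              (\<lambda>w. Qfun p pi1 pi2 mu1 mu2 S1 S2 (fst w)) f \<and>
          (SUP x\<in>{-\<delta>0<..<\<delta>0}. f x) < ennreal M2) \<and>
     pi1 + pi2 = 1 \<and> c \<le> pi1 \<and> pi1 \<le> 1 - c \<and> c \<le> pi2 \<and> pi2 \<le> 1 - c}"

definition Lrisk :: "nat \<Rightarrow> real \<Rightarrow> real \<Rightarrow> real vec \<Rightarrow> real vec \<Rightarrow> real mat \<Rightarrow> real mat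
    \<Rightarrow> ((nat \<Rightarrow> real) \<Rightarrow> nat) \<Rightarrow> real" where
  "Lrisk p pi1 pi2 mu1 mu2 S1 S2 G =
     measure (joint p pi1 pi2 mu1 mu2 S1 S2)
       {w \<in> space (joint p pi1 pi2 mu1 mu2 S1 S2).
          G (fst w) \<noteq> Gstar p pi1 pi2 mu1 mu2 S1 S2 (fst w)}"

definition mis_prob :: "nat \<Rightarrow> real \<Rightarrow> real \<Rightarrow> real vec \<Rightarrow> real vec \<Rightarrow> real mat \<Rightarrow> real mat
    \<Rightarrow> ((nat \<Rightarrow> real) \<Rightarrow> nat) \<Rightarrow> real" where
  "mis_prob p pi1 pi2 mu1 mu2 S1 S2 G =
     measure (joint p pi1 pi2 mu1 mu2 S1 S2)
       {w \<in> space (joint p pi1 pi2 mu1 mu2 S1 S2). G (fst w) \<noteq> snd w}"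

end

theory Submission
  imports Defs
begin

text \<open>Write a = pi1 phi1 and b = pi2 phi2 for the weighted class densities, so that
  Q = 2 log(a/b) and the Bayes rule picks the larger one. The excess risk of G is the
  integral of |a - b| over the disagreement set {G \<noteq> G*}, whose mass is L = L(G).
  Where |Q| \<ge> t the two densities differ by at least t/(4 + \<delta>0) of their sum, and the
  bounded density of Q near 0 gives P(|Q| < t) \<le> 2 t M2. With t = L/(4 M2) the band
  |Q| < t carries at most half of L, so the excess risk is at least
  t/(4 + \<delta>0) L/2 = L^2/(8 M2 (4 + \<delta>0)). The Gaussian facts needed are that
  positive definite covariances have positive determinant and integrable densities.\<close>

section \<open>Quadratic forms and positive definite matrices\<close>

lemma quad_eq_double_sum:
  "A \<in> carrier_mat p p \<Longrightarrow> v \<in> carrier_vec p \<Longrightarrow>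
   quad A v = (\<Sum>i<p. \<Sum>j<p. v$i * A$$(i,j) * v$j)"
  unfolding quad_def scalar_prod_def
  by (auto simp: sum_distrib_left mult_mat_vec_def row_def scalar_prod_def atLeast0LessThan
      mult.assoc intro!: sum.cong)

lemma quad_add_mat:
  "A \<in> carrier_mat p p \<Longrightarrow> B \<in> carrier_mat p p \<Longrightarrow> x \<in> carrier_vec p \<Longrightarrow>
   quad (A + B) x = quad A x + quad B x"
  unfolding quad_def by (simp add: add_mult_distrib_mat_vec scalar_prod_add_distrib[of _ p])

lemma quad_smult_mat:
  "A \<in> carrier_mat p p \<Longrightarrow> x \<in> carrier_vec p \<Longrightarrow> quad (c \<cdot>\<^sub>m A) x = c * quad A x"
  by (auto simp: quad_eq_double_sum[of _ p] sum_distrib_left ac_simps intro!: sum.cong)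

lemma quad_one_mat: "x \<in> carrier_vec p \<Longrightarrow> quad (1\<^sub>m p) x = x \<bullet> x"
  unfolding quad_def by simp

lemma scalar_prod_self_pos: "(x :: real vec) \<in> carrier_vec p \<Longrightarrow> x \<noteq> 0\<^sub>v p \<Longrightarrow> x \<bullet> x > 0"
  using conjugate_square_greater_0_vec[of x p] by simp

lemma scalar_prod_self_eq_sum: "(x :: real vec) \<in> carrier_vec p \<Longrightarrow> x \<bullet> x = (\<Sum>k<p. (x$k)^2)"
  unfolding scalar_prod_def by (auto simp: power2_eq_square atLeast0LessThan)

lemma pos_def_quad_nonneg: "pos_def p S \<Longrightarrow> x \<in> carrier_vec p \<Longrightarrow> quad S x \<ge> 0"
  unfolding pos_def_def quad_def by (cases "x = 0\<^sub>v p") (auto intro: less_imp_le)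

text \<open>The segment from S to the identity stays positive definite, hence nonsingular; since
  det is continuous along it and equals 1 at the identity, det S > 0.\<close>

definition blend_id :: "nat \<Rightarrow> real mat \<Rightarrow> real \<Rightarrow> real mat" where
  "blend_id p S t = t \<cdot>\<^sub>m 1\<^sub>m p + (1 - t) \<cdot>\<^sub>m S"

lemma det_blend_id_nonzero:
  assumes pd: "pos_def p S" and t: "0 \<le> t" "t \<le> 1"
  shows "det (blend_id p S t) \<noteq> 0"
proof
  have S: "S \<in> carrier_mat p p" using pd unfolding pos_def_def by auto
  have B: "blend_id p S t \<in> carrier_mat p p" using S unfolding blend_id_def by auto
  assume "det (blend_id p S t) = 0"
  then obtain v where v: "v \<in> carrier_vec p" "v \<noteq> 0\<^sub>v p" "blend_id p S t *\<^sub>v v = 0\<^sub>v p"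
    using det_0_iff_vec_prod_zero_field[OF B] by blast
  have "quad (blend_id p S t) v = 0" unfolding quad_def v(3) using v(1) by simp
  moreover have "quad (blend_id p S t) v = t * (v \<bullet> v) + (1 - t) * quad S v"
    unfolding blend_id_def using S v(1)
    by (simp add: quad_add_mat[of _ p] quad_smult_mat[of _ p] quad_one_mat)
  moreover have "t * (v \<bullet> v) + (1 - t) * quad S v > 0"
  proof (cases "t = 0")
    case True
    then show ?thesis using pd v unfolding pos_def_def by auto
  next
    case False
    then have "t * (v \<bullet> v) > 0" using t scalar_prod_self_pos[OF v(1,2)] by simp
    moreover have "(1 - t) * quad S v \<ge> 0" using t pos_def_quad_nonneg[OF pd v(1)] by simp
    ultimately show ?thesis by linarith
  qed
  ultimately show False by simp
qed

lemma pos_def_det_pos: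
  assumes pd: "pos_def p S" shows "det S > 0"
proof (rule ccontr)
  assume neg: "\<not> det S > 0"
  have S: "S \<in> carrier_mat p p" using pd unfolding pos_def_def by auto
  define f where "f t = det (blend_id p S t)" for t
  have "blend_id p S 0 = S" using S by (auto simp: blend_id_def intro!: eq_matI)
  then have f0: "f 0 \<le> 0" using neg by (simp add: f_def)
  have "blend_id p S 1 = 1\<^sub>m p" using S by (auto simp: blend_id_def intro!: eq_matI)
  then have f1: "f 1 = 1" by (simp add: f_def)
  have "f t = (\<Sum>\<pi> \<in> {\<pi>. \<pi> permutes {0..<p}}. signof \<pi> *
      (\<Prod>i=0..<p. t * (if i = \<pi> i then 1 else 0) + (1 - t) * S $$ (i,\<pi> i)))" for t
    unfolding f_def blend_id_def using S
    by (subst det_def'[of _ p]) (auto simp: permutes_in_image intro!: sum.cong prod.cong)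
  then have "continuous_on {0..1} f"
    by (subst continuous_on_cong[OF refl]) (auto intro!: continuous_intros)
  then obtain x where "0 \<le> x" "x \<le> 1" "f x = 0"
    using IVT'[of f 0 0 1] f0 f1 by auto
  then show False using det_blend_id_nonzero[OF pd] f_def by auto
qed

lemma pos_def_prec:
  assumes pd: "pos_def p S"
  shows "prec S \<in> carrier_mat p p" "S * prec S = 1\<^sub>m p" "prec S * S = 1\<^sub>m p"
    "transpose_mat (prec S) = prec S"
proof -
  have S: "S \<in> carrier_mat p p" and St: "transpose_mat S = S" using pd unfolding pos_def_def by auto
  have "S \<in> Units (ring_mat TYPE(real) p ())"
    using det_non_zero_imp_unit[OF S] pos_def_det_pos[OF pd] by auto
  then obtain B where B: "mat_inverse S = Some B"
    using mat_inverse(1)[OF S, of "()"] by (cases "mat_inverse S") auto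
  then have SB: "S * B = 1\<^sub>m p" "B * S = 1\<^sub>m p" "B \<in> carrier_mat p p"
    using mat_inverse(2)[OF S] by auto
  moreover have pB: "prec S = B" using B by (simp add: prec_def)
  ultimately show "prec S \<in> carrier_mat p p" "S * prec S = 1\<^sub>m p" "prec S * S = 1\<^sub>m p" by auto
  have BtS: "transpose_mat B * S = 1\<^sub>m p"
    using arg_cong[OF SB(1), of transpose_mat] transpose_mult[OF S SB(3)] St by simp
  have "transpose_mat B = (transpose_mat B * S) * B"
    using SB S by (simp add: assoc_mult_mat[of _ p p _ p _ p])
  then show "transpose_mat (prec S) = prec S" using BtS SB pB by simp
qed

lemma quad_le_abs_entries:
  fixes S :: "real mat"
  assumes S: "S \<in> carrier_mat p p" and x: "x \<in> carrier_vec p"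
  shows "quad S x \<le> (\<Sum>i<p. \<Sum>j<p. \<bar>S$$(i,j)\<bar>) * (x \<bullet> x)"
proof -
  have "x$i * S$$(i,j) * x$j \<le> \<bar>S$$(i,j)\<bar> * (x \<bullet> x)" if "i < p" "j < p" for i j
  proof -
    have "(x$i)^2 \<le> x \<bullet> x" "(x$j)^2 \<le> x \<bullet> x"
      using that x by (auto simp: scalar_prod_self_eq_sum intro!: member_le_sum)
    moreover have "2 * \<bar>x$i * x$j\<bar> \<le> (x$i)^2 + (x$j)^2"
      using sum_squares_bound[of "\<bar>x$i\<bar>" "\<bar>x$j\<bar>"] by (simp add: abs_mult)
    ultimately have "\<bar>x$i * x$j\<bar> \<le> x \<bullet> x" by linarith
    then have "\<bar>S$$(i,j)\<bar> * \<bar>x$i * x$j\<bar> \<le> \<bar>S$$(i,j)\<bar> * (x \<bullet> x)"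
      by (simp add: mult_left_mono)
    moreover have "x$i * S$$(i,j) * x$j \<le> \<bar>S$$(i,j)\<bar> * \<bar>x$i * x$j\<bar>"
      using abs_ge_self[of "x$i * S$$(i,j) * x$j"] by (simp add: abs_mult ac_simps)
    ultimately show ?thesis by linarith
  qed
  then have "quad S x \<le> (\<Sum>i<p. \<Sum>j<p. \<bar>S$$(i,j)\<bar> * (x \<bullet> x))"
    unfolding quad_eq_double_sum[OF S x] by (intro sum_mono) auto
  then show ?thesis by (simp add: sum_distrib_right)
qed

text \<open>With \<Omega> the inverse of S, u = \<Omega>x - x/K and K - 1 bounding the form of S,
  expanding 0 \<le> quad S u gives quad \<Omega> x \<ge> (x \<bullet> x)/K.\<close>

lemma quad_prec_lower_bound:
  assumes pd: "pos_def p S"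
  obtains K :: real where "K > 0" "\<And>x. x \<in> carrier_vec p \<Longrightarrow> x \<bullet> x \<le> K * quad (prec S) x"
proof -
  have S: "S \<in> carrier_mat p p" and St: "transpose_mat S = S" using pd unfolding pos_def_def by auto
  note P = pos_def_prec[OF pd]
  define K where "K = 1 + (\<Sum>i<p. \<Sum>j<p. \<bar>S$$(i,j)\<bar>)"
  have K0: "K > 0" unfolding K_def by (intro add_pos_nonneg zero_less_one sum_nonneg) auto
  have "x \<bullet> x \<le> K * quad (prec S) x" if x: "x \<in> carrier_vec p" for x
  proof -
    define c where "c = 1 / K"
    define w where "w = prec S *\<^sub>v x"
    define u where "u = w - c \<cdot>\<^sub>v x"
    have w: "w \<in> carrier_vec p" and u: "u \<in> carrier_vec p" and Sx: "S *\<^sub>v x \<in> carrier_vec p"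
      using P(1) S x by (auto simp: w_def u_def)
    have Sw: "S *\<^sub>v w = x"
      unfolding w_def using assoc_mult_mat_vec[OF S P(1) x, symmetric] P(2) x by simp
    have "quad S u = u \<bullet> x - c * (u \<bullet> (S *\<^sub>v x))"
      unfolding quad_def u_def using S w x Sw
      by (simp add: mult_minus_distrib_mat_vec mult_mat_vec scalar_prod_minus_distrib[of _ p])
    also have "\<dots> = w \<bullet> x - c * (x \<bullet> x) - c * ((S *\<^sub>v w) \<bullet> x - c * (x \<bullet> (S *\<^sub>v x)))"
      unfolding u_def using w x Sx transpose_vec_mult_scalar[OF S x w] St
      by (simp add: minus_scalar_prod_distrib[of _ p] comm_scalar_prod[of w p "S *\<^sub>v x"])
    also have "\<dots> = quad (prec S) x - c * (x \<bullet> x) - c * (x \<bullet> x - c * quad S x)"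
      unfolding Sw unfolding quad_def w_def using comm_scalar_prod[OF _ x, of "prec S *\<^sub>v x"] P(1) x by simp
    finally have eq: "quad S u = quad (prec S) x - 2 * c * (x \<bullet> x) + c * c * quad S x"
      by (simp add: algebra_simps)
    have "quad S x \<le> (K - 1) * (x \<bullet> x)" using quad_le_abs_entries[OF S x] K_def by simp
    then have "c * c * quad S x \<le> c * (x \<bullet> x) - c * c * (x \<bullet> x)"
      using K0 mult_left_mono[of _ _ "c * c"] unfolding c_def by (simp add: field_simps)
    moreover have "c * c * (x \<bullet> x) \<ge> 0" using x by (simp add: scalar_prod_self_eq_sum sum_nonneg)
    ultimately have "c * (x \<bullet> x) \<le> quad (prec S) x"
      using eq pos_def_quad_nonneg[OF pd u] by linarith
    then show ?thesis using K0 unfolding c_def by (simp add: field_simps)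
  qed
  with K0 that show ?thesis by blast
qed

section \<open>Gaussian densities and the joint law\<close>

definition mahalanobis_sq :: "nat \<Rightarrow> real vec \<Rightarrow> real mat \<Rightarrow> (nat \<Rightarrow> real) \<Rightarrow> real" where
  "mahalanobis_sq p mu S z = quad (prec S) (vec_of p z - mu)"

text \<open>Completing the square: with y = z - mu1 and d = mu2 - mu1, the linear term of Q
  turns the form of Omega2 at y into its form at y - d = z - mu2.\<close>

lemma double_sum_shift_identity:
  fixes O1 O2 :: "nat \<Rightarrow> nat \<Rightarrow> real" and y d :: "nat \<Rightarrow> real"
  assumes sym: "\<And>i j. i < p \<Longrightarrow> j < p \<Longrightarrow> O2 i j = O2 j i"
  shows "(\<Sum>i<p. \<Sum>j<p. y i * (O2 i j - O1 i j) * y j)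
           - 2 * (\<Sum>i<p. (\<Sum>j<p. O2 i j * d j) * (y i - d i / 2))
       = (\<Sum>i<p. \<Sum>j<p. (y i - d i) * O2 i j * (y j - d j)) - (\<Sum>i<p. \<Sum>j<p. y i * O1 i j * y j)"
proof -
  have swap: "(\<Sum>i<p. \<Sum>j<p. O2 i j * d i * y j) = (\<Sum>i<p. \<Sum>j<p. O2 i j * d j * y i)"
    by (subst sum.swap) (auto simp: sym intro!: sum.cong)
  have "(\<Sum>i<p. \<Sum>j<p. y i * (O2 i j - O1 i j) * y j)
          - 2 * (\<Sum>i<p. (\<Sum>j<p. O2 i j * d j) * (y i - d i / 2))
     = (\<Sum>i<p. \<Sum>j<p. ((y i - d i) * O2 i j * (y j - d j) - y i * O1 i j * y j)
          + (O2 i j * d i * y j - O2 i j * d j * y i))"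
    by (simp add: sum_distrib_left sum_distrib_right sum_subtractf[symmetric] algebra_simps)
  also have "\<dots> = (\<Sum>i<p. \<Sum>j<p. (y i - d i) * O2 i j * (y j - d j))
        - (\<Sum>i<p. \<Sum>j<p. y i * O1 i j * y j)
        + ((\<Sum>i<p. \<Sum>j<p. O2 i j * d i * y j) - (\<Sum>i<p. \<Sum>j<p. O2 i j * d j * y i))"
    by (simp add: sum.distrib sum_subtractf)
  finally show ?thesis using swap by simp
qed

lemma Qfun_eq_mahalanobis:
  assumes pd1: "pos_def p S1" and pd2: "pos_def p S2"
    and m1: "mu1 \<in> carrier_vec p" and m2: "mu2 \<in> carrier_vec p"
  shows "Qfun p pi1 pi2 mu1 mu2 S1 S2 z = mahalanobis_sq p mu2 S2 z - mahalanobis_sq p mu1 S1 z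
           - ln (det S1 / det S2) + 2 * ln (pi1 / pi2)"
proof -
  note P1 = pos_def_prec[OF pd1] and P2 = pos_def_prec[OF pd2]
  define O1 where "O1 i j = prec S1 $$ (i,j)" for i j
  define O2 where "O2 i j = prec S2 $$ (i,j)" for i j
  define y where "y i = z i - mu1 $ i" for i
  define d where "d i = mu2 $ i - mu1 $ i" for i
  have sym: "O2 i j = O2 j i" if "i < p" "j < p" for i j
    using arg_cong[OF P2(4), of "\<lambda>A. A $$ (i,j)"] P2(1) that by (auto simp: O2_def)
  have v1: "vec_of p z - mu1 \<in> carrier_vec p" and v2: "vec_of p z - mu2 \<in> carrier_vec p"
    using m1 m2 by (auto simp: vec_of_def)
  have D: "Dmat S1 S2 \<in> carrier_mat p p" unfolding Dmat_def using P1 P2 by auto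
  have beta: "betav mu1 mu2 S2 $ i = (\<Sum>j<p. O2 i j * d j)" if "i < p" for i
    unfolding betav_def using P2(1) m1 m2 that
    by (auto simp: O2_def d_def scalar_prod_def atLeast0LessThan intro!: sum.cong)
  have "quad (Dmat S1 S2) (vec_of p z - mu1) = (\<Sum>i<p. \<Sum>j<p. y i * (O2 i j - O1 i j) * y j)"
    unfolding quad_eq_double_sum[OF D v1] using P1 P2 m1
    by (intro sum.cong refl) (auto simp: Dmat_def y_def O1_def O2_def vec_of_def)
  moreover have "betav mu1 mu2 S2 \<bullet> (vec_of p z - (1/2) \<cdot>\<^sub>v (mu1 + mu2))
      = (\<Sum>i<p. (\<Sum>j<p. O2 i j * d j) * (y i - d i / 2))"
    using m1 m2 P2(1) unfolding scalar_prod_def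
    by (auto simp: atLeast0LessThan beta y_def d_def vec_of_def field_simps
        intro!: sum.cong)
  moreover have "mahalanobis_sq p mu2 S2 z = (\<Sum>i<p. \<Sum>j<p. (y i - d i) * O2 i j * (y j - d j))"
    unfolding mahalanobis_sq_def quad_eq_double_sum[OF P2(1) v2] using m1 m2
    by (intro sum.cong refl) (auto simp: y_def d_def O2_def vec_of_def)
  moreover have "mahalanobis_sq p mu1 S1 z = (\<Sum>i<p. \<Sum>j<p. y i * O1 i j * y j)"
    unfolding mahalanobis_sq_def quad_eq_double_sum[OF P1(1) v1] using m1
    by (intro sum.cong refl) (auto simp: y_def O1_def vec_of_def)
  ultimately show ?thesis
    unfolding Qfun_def using double_sum_shift_identity[of p O2 y O1 d, OF sym] by simp
qed

lemma gauss_dens_eq_mahalanobis: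
  "gauss_dens p mu S z = exp (- mahalanobis_sq p mu S z / 2) / sqrt ((2 * pi) ^ p * det S)"
  by (simp add: gauss_dens_def mahalanobis_sq_def)

lemma gauss_dens_pos: "pos_def p S \<Longrightarrow> gauss_dens p mu S z > 0"
  using pos_def_det_pos by (simp add: gauss_dens_eq_mahalanobis)

lemma weighted_gauss_dens_ratio:
  assumes pd1: "pos_def p S1" and pd2: "pos_def p S2"
    and m1: "mu1 \<in> carrier_vec p" and m2: "mu2 \<in> carrier_vec p"
    and pi1: "pi1 > 0" and pi2: "pi2 > 0"
  shows "pi1 * gauss_dens p mu1 S1 z
           = pi2 * gauss_dens p mu2 S2 z * exp (Qfun p pi1 pi2 mu1 mu2 S1 S2 z / 2)"
proof -
  define a where "a = pi1 * gauss_dens p mu1 S1 z"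
  define b where "b = pi2 * gauss_dens p mu2 S2 z"
  have d1: "det S1 > 0" and d2: "det S2 > 0" using pos_def_det_pos pd1 pd2 by auto
  have a: "a > 0" and b: "b > 0"
    using gauss_dens_pos pd1 pd2 pi1 pi2 by (auto simp: a_def b_def)
  have Q: "Qfun p pi1 pi2 mu1 mu2 S1 S2 z / 2 = ln a - ln b"
    unfolding Qfun_eq_mahalanobis[OF pd1 pd2 m1 m2] a_def b_def gauss_dens_eq_mahalanobis
    using d1 d2 pi1 pi2 by (simp add: ln_mult ln_div ln_sqrt field_simps)
  have "exp (Qfun p pi1 pi2 mu1 mu2 S1 S2 z / 2) = a / b"
    by (simp only: Q exp_diff exp_ln[OF a] exp_ln[OF b])
  then show ?thesis using b by (simp flip: a_def b_def)
qed

lemma component_measurable_lborel_p: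
  "i < p \<Longrightarrow> (\<lambda>z. z i) \<in> borel_measurable (lborel_p p)"
  using measurable_component_singleton[of i "{..<p}" "\<lambda>_. lborel"]
  by (simp add: lborel_p_def)

lemma mahalanobis_sq_measurable:
  assumes pd: "pos_def p S" and m: "mu \<in> carrier_vec p"
  shows "mahalanobis_sq p mu S \<in> borel_measurable (lborel_p p)"
proof -
  note P = pos_def_prec(1)[OF pd]
  have eq: "mahalanobis_sq p mu S z
      = (\<Sum>i<p. \<Sum>j<p. (z i - mu$i) * prec S $$ (i,j) * (z j - mu$j))" for z
    unfolding mahalanobis_sq_def using m
    by (subst quad_eq_double_sum[OF P]) (auto simp: vec_of_def intro!: sum.cong)
  show ?thesis
    unfolding eq[abs_def]
    by (intro borel_measurable_sum borel_measurable_times borel_measurable_diff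
        component_measurable_lborel_p borel_measurable_const) auto
qed

lemma gauss_dens_measurable:
  "pos_def p S \<Longrightarrow> mu \<in> carrier_vec p \<Longrightarrow> gauss_dens p mu S \<in> borel_measurable (lborel_p p)"
  using mahalanobis_sq_measurable by (simp add: gauss_dens_eq_mahalanobis[abs_def])

lemma Qfun_measurable:
  assumes "pos_def p S1" "pos_def p S2" "mu1 \<in> carrier_vec p" "mu2 \<in> carrier_vec p"
  shows "Qfun p pi1 pi2 mu1 mu2 S1 S2 \<in> borel_measurable (lborel_p p)"
  using mahalanobis_sq_measurable assms by (simp add: Qfun_eq_mahalanobis[OF assms, abs_def])

text \<open>The density is dominated by a product of one-dimensional normal densities
  with variance K, where K bounds the spectrum of S.\<close>

lemma gauss_dens_integrable:
  assumes pd: "pos_def p S" and m: "mu \<in> carrier_vec p"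
  shows "integrable (lborel_p p) (gauss_dens p mu S)"
proof -
  interpret product_sigma_finite "\<lambda>_. lborel" by standard
  obtain K where K: "K > 0" "\<And>x. x \<in> carrier_vec p \<Longrightarrow> x \<bullet> x \<le> K * quad (prec S) x"
    using quad_prec_lower_bound[OF pd] by blast
  define \<sigma> where "\<sigma> = sqrt K"
  have \<sigma>: "\<sigma> > 0" "\<sigma>^2 = K" unfolding \<sigma>_def using K by auto
  define C where "C = sqrt (2 * pi * K) ^ p / sqrt ((2 * pi) ^ p * det S)"
  define F where "F z = (\<Prod>i<p. normal_density (mu$i) \<sigma> (z i))" for z
  have Fm: "F \<in> borel_measurable (lborel_p p)"
    unfolding F_def
    by (intro borel_measurable_prod) (auto intro: measurable_compose[OF component_measurable_lborel_p])
  have "(\<integral>\<^sup>+x. ennreal (F x) \<partial>lborel_p p)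
      = (\<integral>\<^sup>+x. (\<Prod>i\<in>{..<p}. ennreal (normal_density (mu$i) \<sigma> (x i))) \<partial>lborel_p p)"
    unfolding F_def by (subst prod_ennreal) auto
  also have "\<dots> = (\<Prod>i\<in>{..<p}. \<integral>\<^sup>+x. ennreal (normal_density (mu$i) \<sigma> x) \<partial>lborel)"
    unfolding lborel_p_def by (rule product_nn_integral_prod) auto
  also have "\<dots> = 1"
    using nn_integral_eq_integral[OF integrable_normal_density[OF \<sigma>(1)]]
      integral_normal_density[OF \<sigma>(1)] by simp
  finally have "integrable (lborel_p p) F"
    using Fm by (intro integrableI_nonneg) (auto simp: F_def intro!: prod_nonneg)
  then have CF: "integrable (lborel_p p) (\<lambda>x. C * F x)" by simp
  show ?thesis
  proof (rule Bochner_Integration.integrable_bound[OF CF gauss_dens_measurable[OF pd m]])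
    show "AE x in lborel_p p. norm (gauss_dens p mu S x) \<le> norm (C * F x)"
    proof (rule AE_I2)
      fix z
      have x: "vec_of p z - mu \<in> carrier_vec p" using m by (auto simp: vec_of_def)
      have "(vec_of p z - mu) \<bullet> (vec_of p z - mu) = (\<Sum>k<p. (z k - mu$k)^2)"
        using scalar_prod_self_eq_sum[OF x] m by (simp add: vec_of_def)
      then have "(\<Sum>k<p. (z k - mu$k)^2) / K \<le> mahalanobis_sq p mu S z"
        using K(2)[OF x] K(1) unfolding mahalanobis_sq_def by (simp add: field_simps)
      then have "exp (- mahalanobis_sq p mu S z / 2) \<le> exp (- ((\<Sum>k<p. (z k - mu$k)^2) / K) / 2)"
        by simp
      also have "\<dots> = (\<Prod>k<p. sqrt (2 * pi * K) * normal_density (mu$k) \<sigma> (z k))"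
        unfolding normal_density_def \<sigma>(2) using K(1)
        by (simp add: exp_sum[symmetric] sum_divide_distrib sum_negf field_simps)
      also have "\<dots> = sqrt (2 * pi * K) ^ p * F z"
        by (simp add: F_def prod.distrib)
      finally have "gauss_dens p mu S z \<le> C * F z"
        using pos_def_det_pos[OF pd] unfolding gauss_dens_eq_mahalanobis C_def
        by (simp add: divide_right_mono)
      then show "norm (gauss_dens p mu S z) \<le> norm (C * F z)"
        using gauss_dens_pos[OF pd] by (simp add: less_imp_le)
    qed
  qed
qed

lemma emeasure_joint:
  fixes P :: "(nat \<Rightarrow> real) \<Rightarrow> nat \<Rightarrow> bool" and p :: nat and pi1 pi2 :: real
    and mu1 mu2 :: "real vec" and S1 S2 :: "real mat"
  defines "a \<equiv> \<lambda>z. pi1 * gauss_dens p mu1 S1 z" and "b \<equiv> \<lambda>z. pi2 * gauss_dens p mu2 S2 z"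
  assumes pd1: "pos_def p S1" and pd2: "pos_def p S2"
    and m1: "mu1 \<in> carrier_vec p" and m2: "mu2 \<in> carrier_vec p"
    and pi1: "pi1 \<ge> 0" and pi2: "pi2 \<ge> 0"
    and P[measurable]: "Measurable.pred (lborel_p p \<Otimes>\<^sub>M count_space {1,2}) (\<lambda>x. P (fst x) (snd x))"
  shows "emeasure (joint p pi1 pi2 mu1 mu2 S1 S2)
           {w \<in> space (joint p pi1 pi2 mu1 mu2 S1 S2). P (fst w) (snd w)}
    = (\<integral>\<^sup>+z. ennreal ((if P z 1 then a z else 0) + (if P z 2 then b z else 0)) \<partial>lborel_p p)"
proof -
  let ?M = "lborel_p p" and ?N = "count_space {1,2::nat}"
  have [measurable]: "a \<in> borel_measurable ?M" "b \<in> borel_measurable ?M"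
    using gauss_dens_measurable pd1 pd2 m1 m2 by (auto simp: a_def b_def)
  have ab: "a z \<ge> 0" "b z \<ge> 0" for z
    using gauss_dens_pos pd1 pd2 pi1 pi2 by (auto simp: a_def b_def less_imp_le)
  define w where "w x = ennreal (if snd x = 1 then a (fst x) else b (fst x))"
    for x :: "(nat \<Rightarrow> real) \<times> nat"
  have [measurable]: "w \<in> borel_measurable (?M \<Otimes>\<^sub>M ?N)" unfolding w_def by measurable
  define E where "E = {x \<in> space (?M \<Otimes>\<^sub>M ?N). P (fst x) (snd x)}"
  have [measurable]: "E \<in> sets (?M \<Otimes>\<^sub>M ?N)" unfolding E_def by measurable
  interpret N: sigma_finite_measure ?N by (rule sigma_finite_measure_count_space_finite) auto
  have "joint p pi1 pi2 mu1 mu2 S1 S2 = density (?M \<Otimes>\<^sub>M ?N) w"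
    unfolding joint_def w_def a_def b_def by (simp add: case_prod_beta')
  then have "emeasure (joint p pi1 pi2 mu1 mu2 S1 S2)
      {w \<in> space (joint p pi1 pi2 mu1 mu2 S1 S2). P (fst w) (snd w)}
      = emeasure (density (?M \<Otimes>\<^sub>M ?N) w) E"
    by (simp add: E_def)
  also have "\<dots> = (\<integral>\<^sup>+x. w x * indicator E x \<partial>(?M \<Otimes>\<^sub>M ?N))"
    by (rule emeasure_density) measurable
  also have "\<dots> = (\<integral>\<^sup>+z. \<integral>\<^sup>+k. w (z,k) * indicator E (z,k) \<partial>?N \<partial>?M)"
    by (rule N.nn_integral_fst[symmetric]) measurable
  also have "\<dots> = (\<integral>\<^sup>+z. ennreal ((if P z 1 then a z else 0) + (if P z 2 then b z else 0)) \<partial>?M)"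
  proof (rule nn_integral_cong)
    fix z assume "z \<in> space ?M"
    then show "(\<integral>\<^sup>+k. w (z,k) * indicator E (z,k) \<partial>?N)
        = ennreal ((if P z 1 then a z else 0) + (if P z 2 then b z else 0))"
      using ab[of z] by (simp add: nn_integral_count_space_finite E_def w_def indicator_def
          space_pair_measure ennreal_plus)
  qed
  finally show ?thesis .
qed

lemma measure_joint:
  fixes P :: "(nat \<Rightarrow> real) \<Rightarrow> nat \<Rightarrow> bool" and p :: nat and pi1 pi2 :: real
    and mu1 mu2 :: "real vec" and S1 S2 :: "real mat"
  defines "a \<equiv> \<lambda>z. pi1 * gauss_dens p mu1 S1 z" and "b \<equiv> \<lambda>z. pi2 * gauss_dens p mu2 S2 z"
  assumes pd1: "pos_def p S1" and pd2: "pos_def p S2"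
    and m1: "mu1 \<in> carrier_vec p" and m2: "mu2 \<in> carrier_vec p"
    and pi1: "pi1 \<ge> 0" and pi2: "pi2 \<ge> 0"
    and P[measurable]: "Measurable.pred (lborel_p p \<Otimes>\<^sub>M count_space {1,2}) (\<lambda>x. P (fst x) (snd x))"
  shows "measure (joint p pi1 pi2 mu1 mu2 S1 S2)
           {w \<in> space (joint p pi1 pi2 mu1 mu2 S1 S2). P (fst w) (snd w)}
    = (LINT z|lborel_p p. (if P z 1 then a z else 0) + (if P z 2 then b z else 0))"
proof -
  let ?M = "lborel_p p"
  define h where "h = (\<lambda>z. (if P z 1 then a z else 0) + (if P z 2 then b z else 0))"
  have [measurable]: "a \<in> borel_measurable ?M" "b \<in> borel_measurable ?M"
    using gauss_dens_measurable pd1 pd2 m1 m2 by (auto simp: a_def b_def)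
  have ab: "a z \<ge> 0" "b z \<ge> 0" for z
    using gauss_dens_pos pd1 pd2 pi1 pi2 by (auto simp: a_def b_def less_imp_le)
  have ab_int: "integrable ?M (\<lambda>z. a z + b z)"
    using gauss_dens_integrable pd1 pd2 m1 m2 by (simp add: a_def b_def)
  have [measurable]: "Measurable.pred ?M (\<lambda>z. P z 1)" "Measurable.pred ?M (\<lambda>z. P z 2)"
    using measurable_compose[OF measurable_Pair2'[of _ "count_space {1,2}" ?M] P] by auto
  have "h \<in> borel_measurable ?M" unfolding h_def by measurable
  then have hi: "integrable ?M h"
    by (rule Bochner_Integration.integrable_bound[OF ab_int]) (use ab in \<open>auto simp: h_def\<close>)
  have "emeasure (joint p pi1 pi2 mu1 mu2 S1 S2)
      {w \<in> space (joint p pi1 pi2 mu1 mu2 S1 S2). P (fst w) (snd w)} = ennreal (integral\<^sup>L ?M h)"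
    using emeasure_joint[OF pd1 pd2 m1 m2 pi1 pi2 P] nn_integral_eq_integral[OF hi] ab
    unfolding h_def a_def b_def by (simp add: ennreal_plus)
  moreover have "integral\<^sup>L ?M h \<ge> 0" using ab by (simp add: h_def)
  ultimately show ?thesis by (simp add: measure_def h_def)
qed

lemma emeasure_abs_less_le:
  fixes J :: "'a measure" and X :: "'a \<Rightarrow> real" and f :: "real \<Rightarrow> ennreal"
  assumes distr: "distributed J lborel X f" and bound: "(SUP x\<in>{-\<delta><..<\<delta>}. f x) < ennreal B"
    and t: "0 \<le> t" "t \<le> \<delta>" and B: "B > 0"
  shows "emeasure J {w \<in> space J. \<bar>X w\<bar> < t} \<le> ennreal (2 * t * B)"
proof -
  have X: "X \<in> measurable J lborel" and f: "f \<in> borel_measurable lborel"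
    and law: "distr J lborel X = density lborel f"
    using distr by (auto simp: distributed_def)
  have "{w \<in> space J. \<bar>X w\<bar> < t} = X -` {-t<..<t} \<inter> space J" by auto
  then have "emeasure J {w \<in> space J. \<bar>X w\<bar> < t} = (\<integral>\<^sup>+x. f x * indicator {-t<..<t} x \<partial>lborel)"
    using emeasure_distr[OF X, of "{-t<..<t}"] law emeasure_density[OF f, of "{-t<..<t}"] by simp
  also have "\<dots> \<le> (\<integral>\<^sup>+x. ennreal B * indicator {-t<..<t} x \<partial>lborel)"
  proof (rule nn_integral_mono)
    fix x
    have "f x \<le> ennreal B" if "x \<in> {-t<..<t}"
      using SUP_upper[of x "{-\<delta><..<\<delta>}" f] bound that t by fastforce
    then show "f x * indicator {-t<..<t} x \<le> ennreal B * indicator {-t<..<t} x"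
      by (auto simp: indicator_def)
  qed
  also have "\<dots> = ennreal B * emeasure lborel {-t<..<t}"
    by (rule nn_integral_cmult_indicator) simp
  also have "\<dots> = ennreal (2 * t * B)"
    using t B by (simp add: ennreal_mult'[symmetric] mult.commute)
  finally show ?thesis .
qed

section \<open>Margin and excess risk\<close>

definition bayes_label :: "real \<Rightarrow> nat" where
  "bayes_label q = (if q > 0 then 1 else 2)"

text \<open>The joint density of (z, L(z)) at labels 1 and 2 is (a, b); predicting k errs
  with weight misclass_weight a b k.\<close>

definition misclass_weight :: "real \<Rightarrow> real \<Rightarrow> nat \<Rightarrow> real" where
  "misclass_weight a b k = (if k \<noteq> 1 then a else 0) + (if k \<noteq> 2 then b else 0)"

lemma diff_ge_of_log_ratio_ge:
  fixes a b q t \<delta> :: real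
  assumes b: "b > 0" and ab: "a = b * exp (q / 2)" and t: "0 \<le> t" "t \<le> q" "t \<le> \<delta>"
  shows "t / (4 + \<delta>) * (a + b) \<le> a - b"
proof -
  define k where "k = t / (4 + \<delta>)"
  have k: "0 \<le> k" "k \<le> 1" using t by (auto simp: k_def field_simps)
  have "(1 + t/2) * (1 - t/D) - (1 + t/D) = t * (D - 4 - t) / (2 * D)" if "D \<noteq> 0" for D
    using that by (simp add: field_simps)
  from this[of "4 + \<delta>"] have "(1 + t/2) * (1 - k) - (1 + k) = t * (\<delta> - t) / (2 * (4 + \<delta>))"
    using t by (simp add: k_def)
  moreover have "t * (\<delta> - t) / (2 * (4 + \<delta>)) \<ge> 0" using t by simp
  ultimately have "1 + k \<le> (1 + t/2) * (1 - k)" by linarith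
  also have "\<dots> \<le> exp (q/2) * (1 - k)"
  proof (rule mult_right_mono)
    show "1 + t/2 \<le> exp (q/2)"
      using exp_ge_add_one_self[of "t/2"] exp_le_cancel_iff[of "t/2" "q/2"] t by linarith
  qed (use k in simp)
  finally have "b * (k * (exp (q/2) + 1)) \<le> b * (exp (q/2) - 1)"
    using b by (intro mult_left_mono) (auto simp: algebra_simps)
  then show ?thesis unfolding k_def[symmetric] ab by (simp add: algebra_simps)
qed

lemma abs_diff_ge_of_abs_log_ratio_ge:
  fixes a b q t \<delta> :: real
  assumes a: "a > 0" and b: "b > 0" and ab: "a = b * exp (q / 2)"
    and t: "0 \<le> t" "t \<le> \<bar>q\<bar>" "t \<le> \<delta>"
  shows "t / (4 + \<delta>) * (a + b) \<le> \<bar>a - b\<bar>"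
proof (cases "q \<ge> 0")
  case True
  then show ?thesis using diff_ge_of_log_ratio_ge[OF b ab t(1) _ t(3)] t(2) by simp
next
  case False
  have ba: "b = a * exp (- q / 2)" using ab by (simp add: exp_minus field_simps)
  have "t / (4 + \<delta>) * (b + a) \<le> b - a"
    using diff_ge_of_log_ratio_ge[OF a ba t(1) _ t(3)] t(2) False by simp
  then show ?thesis by (simp add: add.commute)
qed

lemma misclass_weight_excess_ge:
  fixes a b q t \<delta> :: real and g :: nat
  assumes a: "a > 0" and b: "b > 0" and ab: "a = b * exp (q / 2)" and g: "g \<in> {1,2}"
    and t: "0 \<le> t" "t \<le> \<delta>"
  shows "t / (4 + \<delta>) * ((if g \<noteq> bayes_label q then a + b else 0) - (if \<bar>q\<bar> < t then a + b else 0))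
    \<le> misclass_weight a b g - misclass_weight a b (bayes_label q)"
proof -
  have d: "4 + \<delta> > 0" using t by simp
  have "a > b \<longleftrightarrow> q > 0" using ab b by simp
  then have gap: "misclass_weight a b g - misclass_weight a b (bayes_label q) = \<bar>a - b\<bar>"
    if "g \<noteq> bayes_label q"
    using that g by (auto simp: misclass_weight_def bayes_label_def)
  consider "g = bayes_label q" | "g \<noteq> bayes_label q" "\<bar>q\<bar> < t" | "g \<noteq> bayes_label q" "t \<le> \<bar>q\<bar>"
    by force
  then show ?thesis
  proof cases
    case 1
    then show ?thesis using d t a b by simp
  next
    case 2
    then show ?thesis using gap by simp
  next
    case 3
    then show ?thesis using gap abs_diff_ge_of_abs_log_ratio_ge[OF a b ab t(1) _ t(2)] by simp
  qed
qed

lemma excess_risk_ge_margin: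
  fixes M :: "'a measure" and a b Q :: "'a \<Rightarrow> real" and G :: "'a \<Rightarrow> nat" and t \<delta> :: real
  assumes ai: "integrable M a" and bi: "integrable M b"
    and Qm[measurable]: "Q \<in> borel_measurable M" and Gm[measurable]: "G \<in> M \<rightarrow>\<^sub>M count_space {1,2}"
    and pos: "\<And>z. a z > 0" "\<And>z. b z > 0" and ratio: "\<And>z. a z = b z * exp (Q z / 2)"
    and t: "0 \<le> t" "t \<le> \<delta>"
  shows "t / (4 + \<delta>) * ((LINT z|M. (if G z \<noteq> bayes_label (Q z) then a z + b z else 0))
                          - (LINT z|M. (if \<bar>Q z\<bar> < t then a z + b z else 0)))
    \<le> (LINT z|M. misclass_weight (a z) (b z) (G z))
      - (LINT z|M. misclass_weight (a z) (b z) (bayes_label (Q z)))"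
proof -
  have [measurable]: "a \<in> borel_measurable M" "b \<in> borel_measurable M"
    using ai bi by auto
  have dominated: "integrable M f"
    if [measurable]: "f \<in> borel_measurable M" and "\<And>z. \<bar>f z\<bar> \<le> a z + b z" for f
    using that by (intro Bochner_Integration.integrable_bound[OF Bochner_Integration.integrable_add[OF ai bi]]
        AE_I2) (auto intro: order_trans[OF _ abs_ge_self])
  have ab: "0 \<le> a z + b z" for z
    using pos[of z] by simp
  have w_bound: "\<bar>misclass_weight (a z) (b z) k\<bar> \<le> a z + b z" for z k
    using pos[of z] by (auto simp: misclass_weight_def)
  have "Measurable.pred M (\<lambda>z. if Q z > 0 then G z \<noteq> 1 else G z \<noteq> 2)" by measurable
  then have [measurable]: "Measurable.pred M (\<lambda>z. G z \<noteq> bayes_label (Q z))"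
    by (simp add: bayes_label_def if_distrib cong: if_cong)
  have [measurable]: "(\<lambda>z. bayes_label (Q z)) \<in> M \<rightarrow>\<^sub>M count_space UNIV"
    unfolding bayes_label_def by measurable
  have L: "integrable M (\<lambda>z. if G z \<noteq> bayes_label (Q z) then a z + b z else 0)"
    and B: "integrable M (\<lambda>z. if \<bar>Q z\<bar> < t then a z + b z else 0)"
    and EG: "integrable M (\<lambda>z. misclass_weight (a z) (b z) (G z))"
    and ES: "integrable M (\<lambda>z. misclass_weight (a z) (b z) (bayes_label (Q z)))"
    using ab w_bound by (auto intro!: dominated simp: misclass_weight_def)
  have "t / (4 + \<delta>) * ((LINT z|M. (if G z \<noteq> bayes_label (Q z) then a z + b z else 0))
                          - (LINT z|M. (if \<bar>Q z\<bar> < t then a z + b z else 0)))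
      = (LINT z|M. t / (4 + \<delta>) * ((if G z \<noteq> bayes_label (Q z) then a z + b z else 0)
                                   - (if \<bar>Q z\<bar> < t then a z + b z else 0)))"
    using L B by simp
  also have "\<dots> \<le> (LINT z|M. misclass_weight (a z) (b z) (G z)
                          - misclass_weight (a z) (b z) (bayes_label (Q z)))"
    using L B EG ES pos ratio t measurable_space[OF Gm]
    by (intro integral_mono misclass_weight_excess_ge) auto
  also have "\<dots> = (LINT z|M. misclass_weight (a z) (b z) (G z))
      - (LINT z|M. misclass_weight (a z) (b z) (bayes_label (Q z)))"
    using EG ES by simp
  finally show ?thesis .
qed

section \<open>The two-class Gaussian model\<close>

locale gaussian_mixture =
  fixes p :: nat and pi1 pi2 :: real and mu1 mu2 :: "real vec" and S1 S2 :: "real mat"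
  assumes pd1: "pos_def p S1" and pd2: "pos_def p S2"
    and mu1: "mu1 \<in> carrier_vec p" and mu2: "mu2 \<in> carrier_vec p"
    and pi1_pos: "pi1 > 0" and pi2_pos: "pi2 > 0"
begin

abbreviation "J \<equiv> joint p pi1 pi2 mu1 mu2 S1 S2"
abbreviation "Q \<equiv> Qfun p pi1 pi2 mu1 mu2 S1 S2"
abbreviation "f1 z \<equiv> pi1 * gauss_dens p mu1 S1 z"
abbreviation "f2 z \<equiv> pi2 * gauss_dens p mu2 S2 z"

lemma f1_pos: "f1 z > 0" and f2_pos: "f2 z > 0"
  using gauss_dens_pos pd1 pd2 pi1_pos pi2_pos by auto

lemma integrable_f1: "integrable (lborel_p p) f1" and integrable_f2: "integrable (lborel_p p) f2"
  using gauss_dens_integrable pd1 pd2 mu1 mu2 by auto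

lemma Q_measurable[measurable]: "Q \<in> borel_measurable (lborel_p p)"
  using Qfun_measurable[OF pd1 pd2 mu1 mu2] .

lemma Gstar_eq_bayes_label: "Gstar p pi1 pi2 mu1 mu2 S1 S2 z = bayes_label (Q z)"
  by (simp add: Gstar_def bayes_label_def)

lemma Gstar_measurable: "Gstar p pi1 pi2 mu1 mu2 S1 S2 \<in> lborel_p p \<rightarrow>\<^sub>M count_space {1,2}"
  unfolding Gstar_eq_bayes_label bayes_label_def by measurable

lemma mis_prob_eq_integral:
  assumes H[measurable]: "H \<in> lborel_p p \<rightarrow>\<^sub>M count_space {1,2}"
  shows "mis_prob p pi1 pi2 mu1 mu2 S1 S2 H = (LINT z|lborel_p p. misclass_weight (f1 z) (f2 z) (H z))"
proof -
  let ?MN = "lborel_p p \<Otimes>\<^sub>M count_space {1,2::nat}"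
  have "Measurable.pred ?MN (\<lambda>x. H (fst x) \<noteq> snd x)
      \<longleftrightarrow> Measurable.pred ?MN (\<lambda>x. \<not> ((H (fst x) = 1 \<and> snd x = 1) \<or> (H (fst x) = 2 \<and> snd x = 2)))"
  proof (rule measurable_cong)
    fix x assume "x \<in> space ?MN"
    then have "fst x \<in> space (lborel_p p)" "snd x \<in> {1,2}"
      by (simp_all add: space_pair_measure mem_Times_iff)
    moreover from measurable_space[OF H this(1)] have "H (fst x) \<in> {1,2}" by simp
    ultimately show "(H (fst x) \<noteq> snd x)
        = (\<not> ((H (fst x) = 1 \<and> snd x = 1) \<or> (H (fst x) = 2 \<and> snd x = 2)))"
      by auto
  qed
  also have "\<dots>" by measurable
  finally have "Measurable.pred ?MN (\<lambda>x. H (fst x) \<noteq> snd x)" .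
  from measure_joint[OF pd1 pd2 mu1 mu2 _ _ this] pi1_pos pi2_pos show ?thesis
    by (simp add: mis_prob_def misclass_weight_def)
qed

lemma Lrisk_eq_integral:
  assumes [measurable]: "G \<in> lborel_p p \<rightarrow>\<^sub>M count_space {1,2}"
  shows "Lrisk p pi1 pi2 mu1 mu2 S1 S2 G
    = (LINT z|lborel_p p. (if G z \<noteq> bayes_label (Q z) then f1 z + f2 z else 0))"
proof -
  have "Measurable.pred (lborel_p p \<Otimes>\<^sub>M count_space {1,2})
      (\<lambda>x. if Q (fst x) > 0 then G (fst x) \<noteq> 1 else G (fst x) \<noteq> 2)"
    by measurable
  then have "Measurable.pred (lborel_p p \<Otimes>\<^sub>M count_space {1,2})
      (\<lambda>x. G (fst x) \<noteq> bayes_label (Q (fst x)))"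
    by (simp add: bayes_label_def if_distrib cong: if_cong)
  from measure_joint[OF pd1 pd2 mu1 mu2 _ _ this] pi1_pos pi2_pos show ?thesis
    unfolding Lrisk_def Gstar_eq_bayes_label
    by (auto intro!: Bochner_Integration.integral_cong)
qed

lemma band_integral_le:
  assumes "distributed J lborel (\<lambda>w. Q (fst w)) f" and "(SUP x\<in>{-\<delta><..<\<delta>}. f x) < ennreal B"
    and t: "0 \<le> t" "t \<le> \<delta>" and B: "B > 0"
  shows "(LINT z|lborel_p p. (if \<bar>Q z\<bar> < t then f1 z + f2 z else 0)) \<le> 2 * t * B"
proof -
  have "Measurable.pred (lborel_p p \<Otimes>\<^sub>M count_space {1,2}) (\<lambda>x. \<bar>Q (fst x)\<bar> < t)"
    by measurable
  from measure_joint[OF pd1 pd2 mu1 mu2 _ _ this] pi1_pos pi2_pos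
  have "measure J {w \<in> space J. \<bar>Q (fst w)\<bar> < t}
      = (LINT z|lborel_p p. (if \<bar>Q z\<bar> < t then f1 z + f2 z else 0))"
    by (auto intro!: Bochner_Integration.integral_cong)
  moreover have "measure J {w \<in> space J. \<bar>Q (fst w)\<bar> < t} \<le> 2 * t * B"
    using enn2real_mono[OF emeasure_abs_less_le[OF assms]] t B by (simp add: measure_def)
  ultimately show ?thesis by simp
qed

lemma Lrisk_sq_le_excess_risk:
  assumes G: "G \<in> lborel_p p \<rightarrow>\<^sub>M count_space {1,2}"
    and Q_law: "distributed J lborel (\<lambda>w. Q (fst w)) f" "(SUP x\<in>{-\<delta><..<\<delta>}. f x) < ennreal B"
    and B: "B > 0" and small: "Lrisk p pi1 pi2 mu1 mu2 S1 S2 G < 4 * B * \<delta>"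
  shows "(Lrisk p pi1 pi2 mu1 mu2 S1 S2 G)\<^sup>2 \<le> 8 * B * (4 + \<delta>) *
    (mis_prob p pi1 pi2 mu1 mu2 S1 S2 G
     - mis_prob p pi1 pi2 mu1 mu2 S1 S2 (Gstar p pi1 pi2 mu1 mu2 S1 S2))"
proof -
  define L where "L = Lrisk p pi1 pi2 mu1 mu2 S1 S2 G"
  define t where "t = L / (4 * B)"
  have L0: "L \<ge> 0" unfolding L_def Lrisk_def by simp
  have t: "0 \<le> t" "t \<le> \<delta>" using L0 B small by (auto simp: t_def L_def field_simps)
  have "t / (4 + \<delta>) * (L - 2 * t * B)
      \<le> mis_prob p pi1 pi2 mu1 mu2 S1 S2 G
        - mis_prob p pi1 pi2 mu1 mu2 S1 S2 (Gstar p pi1 pi2 mu1 mu2 S1 S2)"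
  proof -
    have "t / (4 + \<delta>) * (L - 2 * t * B)
        \<le> t / (4 + \<delta>) * (L - (LINT z|lborel_p p. (if \<bar>Q z\<bar> < t then f1 z + f2 z else 0)))"
      using band_integral_le[OF Q_law t B] t by (intro mult_left_mono) auto
    also have "\<dots> \<le> (LINT z|lborel_p p. misclass_weight (f1 z) (f2 z) (G z))
        - (LINT z|lborel_p p. misclass_weight (f1 z) (f2 z) (bayes_label (Q z)))"
      unfolding L_def Lrisk_eq_integral[OF G]
      using excess_risk_ge_margin[OF integrable_f1 integrable_f2 Q_measurable G f1_pos f2_pos
          weighted_gauss_dens_ratio[OF pd1 pd2 mu1 mu2 pi1_pos pi2_pos] t] .
    finally show ?thesis
      using mis_prob_eq_integral[OF G] mis_prob_eq_integral[OF Gstar_measurable]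
      by (simp add: Gstar_eq_bayes_label)
  qed
  moreover have "t / (4 + \<delta>) * (L - 2 * t * B) = L\<^sup>2 / (8 * B * (4 + \<delta>))"
    using B t by (simp add: t_def field_simps power2_eq_square)
  moreover have "8 * B * (4 + \<delta>) > 0" using B t by simp
  ultimately show ?thesis unfolding L_def[symmetric] by (simp add: field_simps)
qed

end

theorem lemma1:
  fixes M0 M1 \<delta>0 M2 c :: real
  assumes "M0 > 0" and "M1 > 1" and "\<delta>0 > 0" and "M2 > 0" and "0 < c" and "c < 1/2"
  shows "\<exists>c0 > 0. \<exists>C > 0. \<forall>p s1 s2 pi1 pi2 mu1 mu2 S1 S2 (G :: (nat \<Rightarrow> real) \<Rightarrow> nat).
     (pi1, pi2, mu1, mu2, S1, S2) \<in> Theta M0 M1 \<delta>0 M2 c p s1 s2 \<longrightarrow>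
     G \<in> lborel_p p \<rightarrow>\<^sub>M count_space {1,2} \<longrightarrow>
     Lrisk p pi1 pi2 mu1 mu2 S1 S2 G < c0 \<longrightarrow>
     (Lrisk p pi1 pi2 mu1 mu2 S1 S2 G)\<^sup>2 \<le>
       C * (mis_prob p pi1 pi2 mu1 mu2 S1 S2 G
            - mis_prob p pi1 pi2 mu1 mu2 S1 S2 (Gstar p pi1 pi2 mu1 mu2 S1 S2))"
proof (rule exI[of _ "4 * M2 * \<delta>0"], intro conjI exI[of _ "8 * M2 * (4 + \<delta>0)"] allI impI)
  fix p s1 s2 pi1 pi2 mu1 mu2 S1 S2 and G :: "(nat \<Rightarrow> real) \<Rightarrow> nat"
  assume \<theta>: "(pi1, pi2, mu1, mu2, S1, S2) \<in> Theta M0 M1 \<delta>0 M2 c p s1 s2"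
    and G: "G \<in> lborel_p p \<rightarrow>\<^sub>M count_space {1,2}"
    and small: "Lrisk p pi1 pi2 mu1 mu2 S1 S2 G < 4 * M2 * \<delta>0"
  interpret gaussian_mixture p pi1 pi2 mu1 mu2 S1 S2
    using \<theta> \<open>0 < c\<close> by unfold_locales (auto simp: Theta_def)
  obtain f where "distributed J lborel (\<lambda>w. Q (fst w)) f" "(SUP x\<in>{-\<delta>0<..<\<delta>0}. f x) < ennreal M2"
    using \<theta> by (auto simp: Theta_def)
  from Lrisk_sq_le_excess_risk[OF G this \<open>M2 > 0\<close> small]
  show "(Lrisk p pi1 pi2 mu1 mu2 S1 S2 G)\<^sup>2 \<le> 8 * M2 * (4 + \<delta>0) *
      (mis_prob p pi1 pi2 mu1 mu2 S1 S2 G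
       - mis_prob p pi1 pi2 mu1 mu2 S1 S2 (Gstar p pi1 pi2 mu1 mu2 S1 S2))" .
qed (use assms in auto)

end
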